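(* Let $\mathcal{X}_1,\mathcal{X}_2$ be non-empty sets (of arbitrary cardinality), let $\mathcal{B}_1\subseteq\mathcal{P}(\mathcal{X}_1)\setminus\{\emptyset\}$ and $\mathcal{B}_2\subseteq\mathcal{P}(\mathcal{X}_2)\setminus\{\emptyset\}$ be arbitrary sets of conditioning events, and for $i\in\{1,2\}$ let $\mathcal{D}_i$ be a coherent set of desirable gambles on $\mathcal{X}_i$. Then $$\mathcal{D}_1\otimes\mathcal{D}_2:=\mathcal{E}\big(\mathcal{A}_{1\to2}\cup\mathcal{A}_{2\to1}\big),$$ where $\mathcal{A}_{1\to2}:=\{f_2(X_2)\mathbb{I}_{B_1}(X_1)\colon f_2\in\mathcal{D}_2,\ B_1\in\mathcal{B}_1\cup\{\mathcal{X}_1\}\}$ and $\mathcal{A}_{2\to1}:=\{f_1(X_1)\mathbb{I}_{B_2}(X_2)\colon f_1\in\mathcal{D}_1,\ B_2\in\mathcal{B}_2\cup\{\mathcal{X}_2\}\}$, is the independent natural extension of $\mathcal{D}_1$ and $\mathcal{D}_2$; that is, it is an independent product of $\mathcal{D}_1$ and $\mathcal{D}_2$, and it is a subset of every independent product of $\mathcal{D}_1$ and $\mathcal{D}_2$.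
   Context: A gamble on a non-empty set $\mathcal{X}$ is a bounded function $\mathcal{X}\to\mathbb{R}$; $\mathcal{G}(\mathcal{X})$ denotes the set of gambles and $\mathcal{G}_{>0}(\mathcal{X})$ the set of non-negative gambles that are not identically zero. $\mathbb{I}_A$ is the indicator of $A$. For $\mathcal{A}\subseteq\mathcal{G}(\mathcal{X})$, $\mathrm{posi}(\mathcal{A}):=\{\sum_{i=1}^n\lambda_if_i\colon n\in\mathbb{N}, \lambda_i\in\mathbb{R}_{>0}, f_i\in\mathcal{A}\}$ and $\mathcal{E}(\mathcal{A}):=\mathrm{posi}(\mathcal{A}\cup\mathcal{G}_{>0}(\mathcal{X}))$. A coherent set of desirable gambles on $\mathcal{X}$ is a set $\mathcal{D}\subseteq\mathcal{G}(\mathcal{X})$ such that for all $f,g\in\mathcal{G}(\mathcal{X})$ and $\lambda>0$: (D1) if $f\geq0$ and $f\neq0$ then $f\in\mathcal{D}$; (D2) if $f\in\mathcal{D}$ then $\lambda f\in\mathcal{D}$; (D3) if $f,g\in\mathcal{D}$ then $f+g\in\mathcal{D}$; (D4) if $f\leq0$ then $f\notin\mathcal{D}$. For $i\in\{1,2\}$, a gamble $f$ on $\mathcal{X}_i$ is identified with its cylindrical extension $f(X_i)$ on $\mathcal{X}_1\times\mathcal{X}_2$, $f(X_i)(x_1,x_2):=f(x_i)$; similarly an event $B\subseteq\mathcal{X}_1$ is identified with $B\times\mathcal{X}_2$ and $B\subseteq\mathcal{X}_2$ with $\mathcal{X}_1\times B$. For a set $\mathcal{D}$ of gambles on $\mathcal{X}_1\times\mathcal{X}_2$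 and $\{i,j\}=\{1,2\}$, let $\mathrm{marg}_i(\mathcal{D}):=\{f\in\mathcal{G}(\mathcal{X}_i)\colon f(X_i)\in\mathcal{D}\}$ and, for non-empty $B_j\subseteq\mathcal{X}_j$, $\mathrm{marg}_i(\mathcal{D}\rfloor B_j):=\{f\in\mathcal{G}(\mathcal{X}_i)\colon f(X_i)\mathbb{I}_{B_j}(X_j)\in\mathcal{D}\}$. A coherent set of desirable gambles $\mathcal{D}$ on $\mathcal{X}_1\times\mathcal{X}_2$ is epistemically independent (w.r.t. $\mathcal{B}_1,\mathcal{B}_2$) if $\mathrm{marg}_i(\mathcal{D}\rfloor B_j)=\mathrm{marg}_i(\mathcal{D})$ for all $\{i,j\}=\{1,2\}$ and all $B_j\in\mathcal{B}_j$. An independent product of $\mathcal{D}_1$ and $\mathcal{D}_2$ is an epistemically independent coherent set of desirable gambles $\mathcal{D}$ on $\mathcal{X}_1\times\mathcal{X}_2$ with $\mathrm{marg}_1(\mathcal{D})=\mathcal{D}_1$ and $\mathrm{marg}_2(\mathcal{D})=\mathcal{D}_2$. The independent natural extension is the smallest (w.r.t. inclusion) independent product. *)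

theory Defs
  imports Main "HOL-Library.Indicator_Function"
begin

text \<open>Sets of conditioning events and the possibility spaces are modelled by types:
  the possibility space X_i is UNIV of type 'a resp. 'b (types are non-empty and of
  arbitrary cardinality).\<close>

definition gambles :: "('x \<Rightarrow> real) set" where
  "gambles = {f. \<exists>M. \<forall>x. \<bar>f x\<bar> \<le> M}"

definition pos_gambles :: "('x \<Rightarrow> real) set" where
  "pos_gambles = {f \<in> gambles. (\<forall>x. f x \<ge> 0) \<and> f \<noteq> (\<lambda>_. 0)}"

definition posi :: "('x \<Rightarrow> real) set \<Rightarrow> ('x \<Rightarrow> real) set" where
  "posi A = {g. \<exists>(n::nat) (lam::nat \<Rightarrow> real) (f::nat \<Rightarrow> 'x \<Rightarrow> real).
      n \<ge> 1 \<and> (\<forall>i<n. lam i > 0 \<and> f i \<in> A) \<and> g = (\<lambda>x. \<Sum>i<n. lam i * f i x)}"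

definition natext :: "('x \<Rightarrow> real) set \<Rightarrow> ('x \<Rightarrow> real) set" where
  "natext A = posi (A \<union> pos_gambles)"

definition coherent :: "('x \<Rightarrow> real) set \<Rightarrow> bool" where
  "coherent D \<longleftrightarrow> D \<subseteq> gambles \<and>
     (\<forall>f \<in> gambles. (\<forall>x. f x \<ge> 0) \<and> f \<noteq> (\<lambda>_. 0) \<longrightarrow> f \<in> D) \<and>
     (\<forall>f \<in> D. \<forall>lam::real. lam > 0 \<longrightarrow> (\<lambda>x. lam * f x) \<in> D) \<and>
     (\<forall>f \<in> D. \<forall>g \<in> D. (\<lambda>x. f x + g x) \<in> D) \<and>
     (\<forall>f \<in> gambles. (\<forall>x. f x \<le> 0) \<longrightarrow> f \<notin> D)"

definition cyl1 :: "('a \<Rightarrow> real) \<Rightarrow> ('a \<times> 'b \<Rightarrow> real)" where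
  "cyl1 f = (\<lambda>(x1, x2). f x1)"

definition cyl2 :: "('b \<Rightarrow> real) \<Rightarrow> ('a \<times> 'b \<Rightarrow> real)" where
  "cyl2 f = (\<lambda>(x1, x2). f x2)"

definition marg1 :: "('a \<times> 'b \<Rightarrow> real) set \<Rightarrow> ('a \<Rightarrow> real) set" where
  "marg1 D = {f \<in> gambles. cyl1 f \<in> D}"

definition marg2 :: "('a \<times> 'b \<Rightarrow> real) set \<Rightarrow> ('b \<Rightarrow> real) set" where
  "marg2 D = {f \<in> gambles. cyl2 f \<in> D}"

definition marg1_cond :: "('a \<times> 'b \<Rightarrow> real) set \<Rightarrow> 'b set \<Rightarrow> ('a \<Rightarrow> real) set" where
  "marg1_cond D B2 = {f \<in> gambles. (\<lambda>(x1, x2). f x1 * indicator B2 x2) \<in> D}"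

definition marg2_cond :: "('a \<times> 'b \<Rightarrow> real) set \<Rightarrow> 'a set \<Rightarrow> ('b \<Rightarrow> real) set" where
  "marg2_cond D B1 = {f \<in> gambles. (\<lambda>(x1, x2). f x2 * indicator B1 x1) \<in> D}"

definition epist_indep :: "'a set set \<Rightarrow> 'b set set \<Rightarrow> ('a \<times> 'b \<Rightarrow> real) set \<Rightarrow> bool" where
  "epist_indep \<B>1 \<B>2 D \<longleftrightarrow> coherent D \<and>
     (\<forall>B2 \<in> \<B>2. marg1_cond D B2 = marg1 D) \<and>
     (\<forall>B1 \<in> \<B>1. marg2_cond D B1 = marg2 D)"

definition indep_product ::
  "'a set set \<Rightarrow> 'b set set \<Rightarrow> ('a \<Rightarrow> real) set \<Rightarrow> ('b \<Rightarrow> real) set \<Rightarrow> ('a \<times> 'b \<Rightarrow> real) set \<Rightarrow> bool" where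
  "indep_product \<B>1 \<B>2 D1 D2 D \<longleftrightarrow> epist_indep \<B>1 \<B>2 D \<and> marg1 D = D1 \<and> marg2 D = D2"

definition A12 :: "'a set set \<Rightarrow> ('b \<Rightarrow> real) set \<Rightarrow> ('a \<times> 'b \<Rightarrow> real) set" where
  "A12 \<B>1 D2 = {(\<lambda>(x1, x2). f2 x2 * indicator B1 x1) | f2 B1. f2 \<in> D2 \<and> B1 \<in> \<B>1 \<union> {UNIV}}"

definition A21 :: "'b set set \<Rightarrow> ('a \<Rightarrow> real) set \<Rightarrow> ('a \<times> 'b \<Rightarrow> real) set" where
  "A21 \<B>2 D1 = {(\<lambda>(x1, x2). f1 x1 * indicator B2 x2) | f1 B2. f1 \<in> D1 \<and> B2 \<in> \<B>2 \<union> {UNIV}}"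

definition indep_nat_ext ::
  "'a set set \<Rightarrow> 'b set set \<Rightarrow> ('a \<Rightarrow> real) set \<Rightarrow> ('b \<Rightarrow> real) set \<Rightarrow> ('a \<times> 'b \<Rightarrow> real) set" where
  "indep_nat_ext \<B>1 \<B>2 D1 D2 = natext (A12 \<B>1 D2 \<union> A21 \<B>2 D1)"

end

theory Submission
  imports Defs
begin

text \<open>The heart of the matter is coherence of \<open>D\<^sub>1 \<otimes> D\<^sub>2\<close>. Each of its elements can be written
  as \<open>h + \<Sum>\<^sub>k b\<^sub>k(X\<^sub>1) I\<^bsub>F\<^sub>k\<^esub>(X\<^sub>2)\<close> with \<open>b\<^sub>k \<in> D\<^sub>1\<close>, \<open>F\<^sub>k \<noteq> {}\<close> and every \<open>X\<^sub>1\<close>-section of \<open>h\<close> in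
  \<open>D\<^sub>2 \<union> {0}\<close>. If such a gamble were \<open>\<le> 0\<close>, then for every \<open>x\<^sub>1\<close> the vector \<open>(-b\<^sub>k(x\<^sub>1))\<^sub>k\<close> would
  lie in the convex cone of coefficient vectors \<open>c\<close> with \<open>\<Sum>\<^sub>k c\<^sub>k I\<^bsub>F\<^sub>k\<^esub> \<in> D\<^sub>2 \<union> {0}\<close>. Coherence of \<open>D\<^sub>2\<close>
  keeps this cone away from the open negative orthant, so it is separated from it by weights
  \<open>\<mu> \<ge> 0\<close>, \<open>\<mu> \<noteq> 0\<close>; then \<open>\<Sum>\<^sub>k \<mu>\<^sub>k b\<^sub>k \<in> D\<^sub>1\<close> is \<open>\<le> 0\<close>, contradicting coherence of \<open>D\<^sub>1\<close>.

  For the (conditional) marginals: if \<open>f \<notin> D\<^sub>1\<close>, adding \<open>-f\<close> to \<open>D\<^sub>1\<close> keeps it coherent, and the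
  independent natural extension built from the enlarged set would contain both
  \<open>f(X\<^sub>1) I\<^bsub>B\<^esub>(X\<^sub>2)\<close> and \<open>-f(X\<^sub>1) I\<^bsub>B\<^esub>(X\<^sub>2)\<close>, hence \<open>0\<close>. The second marginal follows by swapping
  the coordinates. Minimality holds because every independent product contains all generators.\<close>

section \<open>A separation theorem for convex cones in coordinates\<close>

definition max_coord :: "nat \<Rightarrow> (nat \<Rightarrow> real) \<Rightarrow> real" where
  "max_coord n v = Max (v ` {..<n})"

lemma max_coord_ge: "k < n \<Longrightarrow> v k \<le> max_coord n v"
  unfolding max_coord_def by (rule Max_ge) auto

lemma max_coord_le: "n \<ge> 1 \<Longrightarrow> (\<And>k. k < n \<Longrightarrow> v k \<le> B) \<Longrightarrow> max_coord n v \<le> B"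
  unfolding max_coord_def by (subst Max_le_iff) (auto simp: lessThan_empty_iff)

lemma max_coord_cong: "(\<And>k. k < n \<Longrightarrow> v k = w k) \<Longrightarrow> max_coord n v = max_coord n w"
  unfolding max_coord_def by (metis image_cong lessThan_iff)

lemma max_coord_add_le: "n \<ge> 1 \<Longrightarrow> max_coord n (\<lambda>k. v k + w k) \<le> max_coord n v + max_coord n w"
  by (rule max_coord_le) (auto intro: add_mono max_coord_ge)

lemma max_coord_scale:
  assumes "n \<ge> 1" "t > 0"
  shows "max_coord n (\<lambda>k. t * v k) = t * max_coord n v"
proof -
  have "mono ((*) t)" using assms(2) by (simp add: mono_def)
  then have "t * Max (v ` {..<n}) = Max ((*) t ` v ` {..<n})"
    using assms(1) by (intro mono_Max_commute) (auto simp: lessThan_empty_iff)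
  then show ?thesis unfolding max_coord_def by (simp add: image_image)
qed

locale orthant_avoiding_cone =
  fixes n :: nat and G :: "(nat \<Rightarrow> real) set"
  assumes dim: "n \<ge> 1"
    and zero_in: "(\<lambda>_. 0) \<in> G"
    and add_in: "c \<in> G \<Longrightarrow> d \<in> G \<Longrightarrow> (\<lambda>k. c k + d k) \<in> G"
    and scale_in: "c \<in> G \<Longrightarrow> t > 0 \<Longrightarrow> (\<lambda>k. t * c k) \<in> G"
    and nonneg_coord: "c \<in> G \<Longrightarrow> \<exists>k<n. c k \<ge> 0"
begin

definition gauge :: "(nat \<Rightarrow> real) \<Rightarrow> (nat \<Rightarrow> real) \<Rightarrow> real" where
  "gauge x c = max_coord n (\<lambda>k. x k + c k)"

lemma gauge_scale: "t > 0 \<Longrightarrow> gauge (\<lambda>k. t * x k) (\<lambda>k. t * c k) = t * gauge x c"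
  unfolding gauge_def using max_coord_scale[OF dim, of t "\<lambda>k. x k + c k"] by (simp add: distrib_left)

lemma gauge_add_le: "gauge (\<lambda>k. x k + y k) (\<lambda>k. c k + d k) \<le> gauge x c + gauge y d"
  unfolding gauge_def using max_coord_add_le[OF dim, of "\<lambda>k. x k + c k" "\<lambda>k. y k + d k"]
  by (simp add: algebra_simps)

text \<open>The weights \<open>\<mu>\<close> are built one coordinate at a time, as in the proof of the
  Hahn--Banach theorem: the functional is kept below the sublinear function
  \<open>x \<mapsto> inf {gauge x c | c \<in> G}\<close> on the vectors supported below \<open>m\<close>.\<close>

definition dominated :: "nat \<Rightarrow> (nat \<Rightarrow> real) \<Rightarrow> bool" where
  "dominated m \<mu> \<longleftrightarrow> (\<forall>x c. (\<forall>k\<ge>m. x k = 0) \<longrightarrow> c \<in> G \<longrightarrow> (\<Sum>k<m. \<mu> k * x k) \<le> gauge x c)"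

lemma dominated_0: "dominated 0 \<mu>"
  unfolding dominated_def
proof (intro allI impI)
  fix x c :: "nat \<Rightarrow> real" assume "\<forall>k\<ge>0. x k = 0" and c: "c \<in> G"
  then have "(\<lambda>k. x k + c k) = c" by auto
  moreover obtain k where "k < n" "c k \<ge> 0" using nonneg_coord[OF c] by blast
  ultimately show "(\<Sum>k<0. \<mu> k * x k) \<le> gauge x c"
    unfolding gauge_def using max_coord_ge[of k n c] by simp
qed

lemma dominated_lower_le_upper:
  assumes "dominated m \<mu>" "\<forall>k\<ge>m. y k = 0" "\<forall>k\<ge>m. z k = 0" "c \<in> G" "d \<in> G"
  shows "(\<Sum>k<m. \<mu> k * y k) - gauge (\<lambda>k. y k - indicator {m} k) c
    \<le> gauge (\<lambda>k. z k + indicator {m} k) d - (\<Sum>k<m. \<mu> k * z k)"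
proof -
  \<comment> \<open>the two shifts by the unit vector cancel\<close>
  have "(\<Sum>k<m. \<mu> k * (y k + z k)) \<le> gauge (\<lambda>k. y k + z k) (\<lambda>k. c k + d k)"
    using assms(1-3) add_in[OF assms(4,5)] unfolding dominated_def by auto
  then have "(\<Sum>k<m. \<mu> k * y k) + (\<Sum>k<m. \<mu> k * z k) \<le> gauge (\<lambda>k. y k + z k) (\<lambda>k. c k + d k)"
    by (simp add: distrib_left sum.distrib)
  also have "\<dots> \<le> gauge (\<lambda>k. y k - indicator {m} k) c + gauge (\<lambda>k. z k + indicator {m} k) d"
    using gauge_add_le[of "\<lambda>k. y k - indicator {m} k" "\<lambda>k. z k + indicator {m} k" c d] by simp
  finally show ?thesis by simp
qed

lemma dominated_extend:
  assumes dom: "dominated m \<mu>"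
    and lower: "\<And>y c. \<forall>k\<ge>m. y k = 0 \<Longrightarrow> c \<in> G \<Longrightarrow>
      (\<Sum>k<m. \<mu> k * y k) - gauge (\<lambda>k. y k - indicator {m} k) c \<le> a"
    and upper: "\<And>y c. \<forall>k\<ge>m. y k = 0 \<Longrightarrow> c \<in> G \<Longrightarrow>
      a \<le> gauge (\<lambda>k. y k + indicator {m} k) c - (\<Sum>k<m. \<mu> k * y k)"
  shows "dominated (Suc m) (\<mu>(m := a))"
  unfolding dominated_def
proof (intro allI impI)
  fix x c assume x: "\<forall>k\<ge>Suc m. x k = (0::real)" and c: "c \<in> G"
  define L where "L y = (\<Sum>k<m. \<mu> k * y k)" for y
  define t where "t = x m"
  define y where "y = x(m := 0)"
  have y: "\<forall>k\<ge>m. y k = 0" "\<forall>k\<ge>m. s * y k = 0" for s using x unfolding y_def by auto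
  have x_eq: "x k = y k + t * indicator {m} k" for k unfolding y_def t_def by auto
  have L_scale: "L (\<lambda>k. s * y k) = s * L y" for s
    unfolding L_def by (simp add: sum_distrib_left algebra_simps)
  have "L y + a * t \<le> gauge x c"
  proof (cases t "0::real" rule: linorder_cases)
    case equal
    then have "x = y" using x_eq by auto
    then show ?thesis using dom y c equal unfolding dominated_def L_def by simp
  next
    case greater
    then have "(\<lambda>k. (1 / t) * x k) = (\<lambda>k. (1 / t) * y k + indicator {m} k)"
      by (auto simp: x_eq algebra_simps)
    then have "gauge (\<lambda>k. (1 / t) * y k + indicator {m} k) (\<lambda>k. (1 / t) * c k) = (1 / t) * gauge x c"
      using gauge_scale[of "1 / t" x c] greater by simp
    moreover have "a \<le> gauge (\<lambda>k. (1 / t) * y k + indicator {m} k) (\<lambda>k. (1 / t) * c k) - L (\<lambda>k. (1 / t) * y k)"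
      using upper[OF y(2)[of "1 / t"] scale_in[OF c, of "1 / t"]] greater unfolding L_def by simp
    ultimately have "a \<le> (1 / t) * (gauge x c - L y)"
      using L_scale[of "1 / t"] by (simp only: right_diff_distrib)
    then show ?thesis using greater by (simp add: field_simps)
  next
    case less
    then have "(\<lambda>k. (- 1 / t) * x k) = (\<lambda>k. (- 1 / t) * y k - indicator {m} k)"
      by (auto simp: x_eq algebra_simps)
    then have "gauge (\<lambda>k. (- 1 / t) * y k - indicator {m} k) (\<lambda>k. (- 1 / t) * c k) = (- 1 / t) * gauge x c"
      using gauge_scale[of "- 1 / t" x c] less by (simp add: divide_neg_pos)
    moreover have "L (\<lambda>k. (- 1 / t) * y k) - gauge (\<lambda>k. (- 1 / t) * y k - indicator {m} k) (\<lambda>k. (- 1 / t) * c k) \<le> a"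
      using lower[OF y(2)[of "- 1 / t"] scale_in[OF c, of "- 1 / t"]] less
      unfolding L_def by (simp add: divide_neg_pos)
    ultimately have "(- 1 / t) * (L y - gauge x c) \<le> a"
      using L_scale[of "- 1 / t"] by (simp only: right_diff_distrib)
    then show ?thesis using less by (simp add: field_simps)
  qed
  moreover have "(\<Sum>k<Suc m. (\<mu>(m := a)) k * x k) = L y + a * t"
    unfolding L_def y_def t_def by simp
  ultimately show "(\<Sum>k<Suc m. (\<mu>(m := a)) k * x k) \<le> gauge x c" by simp
qed

lemma dominated_Suc:
  assumes dom: "dominated m \<mu>"
  shows "\<exists>a. dominated (Suc m) (\<mu>(m := a))"
proof -
  define lower where "lower = {(\<Sum>k<m. \<mu> k * y k) - gauge (\<lambda>k. y k - indicator {m} k) c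
      | y c. (\<forall>k\<ge>m. y k = 0) \<and> c \<in> G}"
  define upper where "upper = {gauge (\<lambda>k. y k + indicator {m} k) c - (\<Sum>k<m. \<mu> k * y k)
      | y c. (\<forall>k\<ge>m. y k = 0) \<and> c \<in> G}"
  have lower_le_upper: "l \<le> u" if "l \<in> lower" "u \<in> upper" for l u
    using that dominated_lower_le_upper[OF dom] unfolding lower_def upper_def by blast
  have "lower \<noteq> {}" "upper \<noteq> {}"
    unfolding lower_def upper_def using zero_in by (auto intro!: exI[of _ "\<lambda>_. 0"])
  then have "bdd_above lower" using lower_le_upper by (meson bdd_above_def ex_in_conv)
  have "dominated (Suc m) (\<mu>(m := Sup lower))"
  proof (rule dominated_extend[OF dom])
    show "(\<Sum>k<m. \<mu> k * y k) - gauge (\<lambda>k. y k - indicator {m} k) c \<le> Sup lower"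
      if "\<forall>k\<ge>m. y k = 0" "c \<in> G" for y c
      using that \<open>bdd_above lower\<close> unfolding lower_def by (intro cSup_upper) auto
    show "Sup lower \<le> gauge (\<lambda>k. y k + indicator {m} k) c - (\<Sum>k<m. \<mu> k * y k)"
      if "\<forall>k\<ge>m. y k = 0" "c \<in> G" for y c
    proof -
      have "gauge (\<lambda>k. y k + indicator {m} k) c - (\<Sum>k<m. \<mu> k * y k) \<in> upper"
        using that unfolding upper_def by blast
      then show ?thesis using \<open>lower \<noteq> {}\<close> lower_le_upper by (intro cSup_least) auto
    qed
  qed
  then show ?thesis by blast
qed

lemma dominated_exists: "\<exists>\<mu>. dominated m \<mu>"
proof (induction m)
  case 0
  then show ?case using dominated_0 by blast
next
  case (Suc m)
  then show ?case using dominated_Suc by blast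
qed

theorem separating_weights:
  "\<exists>\<mu>. (\<forall>k<n. \<mu> k \<ge> 0) \<and> (\<exists>k<n. \<mu> k > 0) \<and> (\<forall>c\<in>G. 0 \<le> (\<Sum>k<n. \<mu> k * c k))"
proof -
  obtain \<mu> where dom: "dominated n \<mu>" using dominated_exists by blast
  have bound: "(\<Sum>k<n. \<mu> k * v k) \<le> max_coord n (\<lambda>k. v k + c k)" if "c \<in> G" for v c
  proof -
    define x where "x k = (if k < n then v k else 0)" for k
    have "\<forall>k\<ge>n. x k = 0" unfolding x_def by simp
    then have "(\<Sum>k<n. \<mu> k * x k) \<le> max_coord n (\<lambda>k. x k + c k)"
      using dom that unfolding dominated_def gauge_def by blast
    moreover have "max_coord n (\<lambda>k. x k + c k) = max_coord n (\<lambda>k. v k + c k)"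
      unfolding x_def by (rule max_coord_cong) simp
    ultimately show ?thesis unfolding x_def by simp
  qed
  have nonneg: "\<mu> k \<ge> 0" if "k < n" for k
  proof -
    define v :: "nat \<Rightarrow> real" where "v i = (if i = k then - 1 else 0)" for i
    have "(\<Sum>i<n. \<mu> i * v i) \<le> max_coord n (\<lambda>i. v i + 0)"
      using bound[OF zero_in] .
    also have "\<dots> \<le> 0" by (rule max_coord_le[OF dim]) (simp add: v_def)
    finally show ?thesis using that by (simp add: v_def if_distrib cong: if_cong)
  qed
  have "- (\<Sum>k<n. \<mu> k) \<le> max_coord n (\<lambda>k. - 1 + 0)"
    using bound[OF zero_in, of "\<lambda>_. - 1"] by (simp add: sum_negf)
  also have "\<dots> \<le> - 1" by (rule max_coord_le[OF dim]) auto
  finally have "\<exists>k<n. \<mu> k > 0" using sum_nonpos[of "{..<n}" \<mu>] by (force simp: not_le)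
  moreover have "0 \<le> (\<Sum>k<n. \<mu> k * c k)" if "c \<in> G" for c
  proof -
    have "(\<Sum>k<n. \<mu> k * - c k) \<le> max_coord n (\<lambda>k. - c k + c k)" using bound[OF that] .
    also have "\<dots> \<le> 0" by (rule max_coord_le[OF dim]) auto
    finally show ?thesis by (simp add: sum_negf)
  qed
  ultimately show ?thesis using nonneg by blast
qed

end

section \<open>Gambles, coherence and natural extension\<close>

lemma gamblesI: "(\<And>x. \<bar>f x\<bar> \<le> M) \<Longrightarrow> f \<in> gambles"
  unfolding gambles_def by blast

lemma gambles_add: "f \<in> gambles \<Longrightarrow> g \<in> gambles \<Longrightarrow> (\<lambda>x. f x + g x) \<in> gambles"
proof -
  assume "f \<in> gambles" "g \<in> gambles"
  then obtain M N where "\<forall>x. \<bar>f x\<bar> \<le> M" "\<forall>x. \<bar>g x\<bar> \<le> N" unfolding gambles_def by blast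
  then have "\<bar>f x + g x\<bar> \<le> M + N" for x
    using abs_triangle_ineq[of "f x" "g x"] by (metis add_mono order_trans)
  then show ?thesis by (rule gamblesI)
qed

lemma gambles_scale: "f \<in> gambles \<Longrightarrow> (\<lambda>x. t * f x) \<in> gambles"
proof -
  assume "f \<in> gambles"
  then obtain M where "\<forall>x. \<bar>f x\<bar> \<le> M" unfolding gambles_def by blast
  then have "\<bar>t * f x\<bar> \<le> \<bar>t\<bar> * M" for x by (simp add: abs_mult mult_left_mono)
  then show ?thesis by (rule gamblesI)
qed

lemma gambles_comp: "f \<in> gambles \<Longrightarrow> f \<circ> \<sigma> \<in> gambles"
  unfolding gambles_def by auto

lemma gambles_section: "g \<in> gambles \<Longrightarrow> (\<lambda>x2. g (x1, x2)) \<in> gambles"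
  unfolding gambles_def by blast

lemma gambles_times_indicator: "f \<in> gambles \<Longrightarrow> (\<lambda>z. f (u z) * indicator B (v z)) \<in> gambles"
proof -
  assume "f \<in> gambles"
  then obtain M where M: "\<forall>x. \<bar>f x\<bar> \<le> M" unfolding gambles_def by blast
  then have "M \<ge> 0" by (meson abs_ge_zero order_trans)
  with M show ?thesis by (intro gamblesI[of _ M]) (auto simp: indicator_def)
qed

lemma coherent_gambles: "coherent D \<Longrightarrow> D \<subseteq> gambles"
  unfolding coherent_def by blast

lemma coherent_add: "coherent D \<Longrightarrow> f \<in> D \<Longrightarrow> g \<in> D \<Longrightarrow> (\<lambda>x. f x + g x) \<in> D"
  unfolding coherent_def by blast

lemma coherent_scale: "coherent D \<Longrightarrow> f \<in> D \<Longrightarrow> t > 0 \<Longrightarrow> (\<lambda>x. t * f x) \<in> D"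
  unfolding coherent_def by blast

lemma coherent_nonneg:
  "coherent D \<Longrightarrow> f \<in> gambles \<Longrightarrow> \<forall>x. f x \<ge> 0 \<Longrightarrow> f \<noteq> (\<lambda>_. 0) \<Longrightarrow> f \<in> D"
  unfolding coherent_def by blast

lemma coherent_nonpos: "coherent D \<Longrightarrow> \<forall>x. f x \<le> 0 \<Longrightarrow> f \<notin> D"
  unfolding coherent_def by blast

lemma coherent_add_nonneg:
  assumes "coherent D" "f \<in> D" "p \<in> gambles" "\<forall>x. p x \<ge> 0"
  shows "(\<lambda>x. f x + p x) \<in> D"
proof (cases "p = (\<lambda>_. 0)")
  case True
  then show ?thesis using assms by simp
next
  case False
  then show ?thesis using assms coherent_nonneg coherent_add by blast
qed

abbreviation with_zero :: "('x \<Rightarrow> real) set \<Rightarrow> ('x \<Rightarrow> real) set" where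
  "with_zero D \<equiv> insert (\<lambda>_. 0) D"

lemma with_zero_add:
  "coherent D \<Longrightarrow> f \<in> with_zero D \<Longrightarrow> g \<in> with_zero D \<Longrightarrow> (\<lambda>x. f x + g x) \<in> with_zero D"
  using coherent_add by fastforce

lemma with_zero_scale: "coherent D \<Longrightarrow> f \<in> with_zero D \<Longrightarrow> t > 0 \<Longrightarrow> (\<lambda>x. t * f x) \<in> with_zero D"
  using coherent_scale by fastforce

lemma with_zero_add_nonneg:
  assumes "coherent D" "f \<in> with_zero D" "p \<in> gambles" "\<forall>x. p x \<ge> 0"
  shows "(\<lambda>x. f x + p x) \<in> with_zero D"
proof (cases "f = (\<lambda>_. 0)")
  case True
  then show ?thesis using coherent_nonneg[OF assms(1,3,4)] by (cases "p = (\<lambda>_. 0)") auto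
next
  case False
  then show ?thesis using assms coherent_add_nonneg by blast
qed

lemma coherent_add_with_zero: "coherent D \<Longrightarrow> f \<in> D \<Longrightarrow> g \<in> with_zero D \<Longrightarrow> (\<lambda>x. f x + g x) \<in> D"
  using coherent_add by fastforce

lemma with_zero_sum:
  assumes "coherent D" "\<And>k. k \<in> K \<Longrightarrow> \<mu> k \<ge> 0 \<and> f k \<in> D"
  shows "(\<lambda>x. \<Sum>k\<in>K. \<mu> k * f k x) \<in> with_zero D"
  using assms(2)
proof (induction K rule: infinite_finite_induct)
  case (insert k K)
  have "(\<lambda>x. \<mu> k * f k x) \<in> with_zero D"
    using insert.prems coherent_scale[OF assms(1), of "f k" "\<mu> k"]
    by (cases "\<mu> k = 0") (auto simp: less_le)
  then show ?case using insert with_zero_add[OF assms(1)] by simp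
qed simp_all

lemma coherent_sum:
  assumes "coherent D" "finite K" "\<And>k. k \<in> K \<Longrightarrow> \<mu> k \<ge> 0 \<and> f k \<in> D" "j \<in> K" "\<mu> j > 0"
  shows "(\<lambda>x. \<Sum>k\<in>K. \<mu> k * f k x) \<in> D"
proof -
  have "(\<lambda>x. \<mu> j * f j x + (\<Sum>k\<in>K - {j}. \<mu> k * f k x)) \<in> D"
    using assms by (intro coherent_add_with_zero coherent_scale with_zero_sum) auto
  then show ?thesis using assms(2,4) by (simp add: sum.remove)
qed

lemma sum_lessThan_add: "(\<Sum>k<m + (n::nat). f k) = (\<Sum>k<m. f k) + (\<Sum>k<n. f (m + k))"
  by (induction n) (auto simp: add.assoc)

lemma subset_posi: "A \<subseteq> posi A"
proof
  fix f assume "f \<in> A"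
  then show "f \<in> posi A"
    unfolding posi_def by (intro CollectI exI[of _ 1] exI[of _ "\<lambda>_. 1"] exI[of _ "\<lambda>_. f"]) auto
qed

lemma posi_scale:
  assumes "g \<in> posi A" "t > 0"
  shows "(\<lambda>x. t * g x) \<in> posi A"
proof -
  obtain n :: nat and lam f where
    g: "n \<ge> 1" "\<forall>i<n. lam i > 0 \<and> f i \<in> A" "g = (\<lambda>x. \<Sum>i<n. lam i * f i x)"
    using assms(1) unfolding posi_def by blast
  have "(\<lambda>x. t * g x) = (\<lambda>x. \<Sum>i<n. (t * lam i) * f i x)"
    using g(3) by (simp add: sum_distrib_left mult.assoc)
  then show ?thesis unfolding posi_def using g(1,2) assms(2)
    by (intro CollectI exI[of _ n] exI[of _ "\<lambda>i. t * lam i"] exI[of _ f]) auto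
qed

lemma posi_add:
  assumes "g \<in> posi A" "g' \<in> posi A"
  shows "(\<lambda>x. g x + g' x) \<in> posi A"
proof -
  obtain n :: nat and lam f where
    g: "n \<ge> 1" "\<forall>i<n. lam i > 0 \<and> f i \<in> A" "g = (\<lambda>x. \<Sum>i<n. lam i * f i x)"
    using assms(1) unfolding posi_def by blast
  obtain n' :: nat and lam' f' where
    g': "\<forall>i<n'. lam' i > 0 \<and> f' i \<in> A" "g' = (\<lambda>x. \<Sum>i<n'. lam' i * f' i x)"
    using assms(2) unfolding posi_def by blast
  define L where "L i = (if i < n then lam i else lam' (i - n))" for i
  define F where "F i = (if i < n then f i else f' (i - n))" for i
  have "(\<lambda>x. g x + g' x) = (\<lambda>x. \<Sum>i<n + n'. L i * F i x)"
    using g(3) g'(2) by (simp add: sum_lessThan_add L_def F_def)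
  moreover have "\<forall>i<n + n'. L i > 0 \<and> F i \<in> A" using g(2) g'(1) unfolding L_def F_def by auto
  ultimately show ?thesis unfolding posi_def using g(1)
    by (intro CollectI exI[of _ "n + n'"] exI[of _ L] exI[of _ F]) auto
qed

lemma posi_mono: "A \<subseteq> B \<Longrightarrow> posi A \<subseteq> posi B"
  unfolding posi_def by blast

lemma posi_induct [consumes 1, case_names base scale add]:
  assumes "g \<in> posi A"
    and base: "\<And>f. f \<in> A \<Longrightarrow> P f"
    and scale: "\<And>f t. P f \<Longrightarrow> t > 0 \<Longrightarrow> P (\<lambda>x. t * f x)"
    and add: "\<And>f f'. P f \<Longrightarrow> P f' \<Longrightarrow> P (\<lambda>x. f x + f' x)"
  shows "P g"
proof -
  obtain n :: nat and lam f where
    g: "n \<ge> 1" "\<forall>i<n. lam i > 0 \<and> f i \<in> A" "g = (\<lambda>x. \<Sum>i<n. lam i * f i x)"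
    using assms(1) unfolding posi_def by blast
  have partial_sums: "P (\<lambda>x. \<Sum>i<Suc m. lam i * f i x)" if "m < n" for m
    using that
  proof (induction m)
    case 0
    then show ?case using g(2) base scale by simp
  next
    case (Suc m)
    then have "P (\<lambda>x. (\<Sum>i<Suc m. lam i * f i x) + lam (Suc m) * f (Suc m) x)"
      using g(2) base scale by (intro add) auto
    then show ?case by simp
  qed
  obtain m where "n = Suc m" using g(1) by (cases n) auto
  then show ?thesis using partial_sums[of m] g(3) by simp
qed

lemma posi_gambles:
  assumes "A \<subseteq> gambles"
  shows "posi A \<subseteq> gambles"
proof
  fix g assume "g \<in> posi A"
  then show "g \<in> gambles"
    by (induction rule: posi_induct) (use assms in \<open>auto intro: gambles_scale gambles_add\<close>)
qed

lemma posi_subset_coherent: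
  assumes "coherent D"
  shows "posi D \<subseteq> D"
proof
  fix g assume "g \<in> posi D"
  then show "g \<in> D"
    by (induction rule: posi_induct) (use assms in \<open>auto intro: coherent_scale coherent_add\<close>)
qed

lemma posi_comp: "g \<in> posi A \<Longrightarrow> g \<circ> \<sigma> \<in> posi ((\<lambda>f. f \<circ> \<sigma>) ` A)"
proof (induction rule: posi_induct)
  case (base f)
  then have "f \<circ> \<sigma> \<in> (\<lambda>f. f \<circ> \<sigma>) ` A" by (rule imageI)
  then show ?case by (rule subsetD[OF subset_posi])
next
  case (scale f t)
  then show ?case unfolding comp_def by (rule posi_scale)
next
  case (add f f')
  then show ?case unfolding comp_def by (rule posi_add)
qed

lemma subset_natext: "A \<subseteq> natext A"
  unfolding natext_def using subset_posi by blast

lemma natext_mono: "A \<subseteq> B \<Longrightarrow> natext A \<subseteq> natext B"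
  unfolding natext_def by (rule posi_mono) blast

lemma natext_add: "f \<in> natext A \<Longrightarrow> g \<in> natext A \<Longrightarrow> (\<lambda>x. f x + g x) \<in> natext A"
  unfolding natext_def by (rule posi_add)

lemma natext_subset_coherent:
  assumes "coherent D" "A \<subseteq> D"
  shows "natext A \<subseteq> D"
proof -
  have "pos_gambles \<subseteq> D"
    using coherent_nonneg[OF assms(1)] unfolding pos_gambles_def by auto
  then have "posi (A \<union> pos_gambles) \<subseteq> posi D"
    using assms(2) by (intro posi_mono) auto
  then show ?thesis unfolding natext_def using posi_subset_coherent[OF assms(1)] by auto
qed

lemma natext_gambles: "A \<subseteq> gambles \<Longrightarrow> natext A \<subseteq> gambles"
  unfolding natext_def by (intro posi_gambles) (auto simp: pos_gambles_def)

lemma coherent_natextI: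
  assumes "A \<subseteq> gambles" and no_nonpos: "\<And>g. g \<in> natext A \<Longrightarrow> \<forall>x. g x \<le> 0 \<Longrightarrow> False"
  shows "coherent (natext A)"
  unfolding coherent_def
proof (intro conjI ballI allI impI)
  show "natext A \<subseteq> gambles" using assms(1) by (rule natext_gambles)
  show "f \<in> natext A" if "f \<in> gambles" "(\<forall>x. f x \<ge> 0) \<and> f \<noteq> (\<lambda>_. 0)" for f
  proof -
    have "f \<in> A \<union> pos_gambles" using that unfolding pos_gambles_def by blast
    then show ?thesis unfolding natext_def by (rule subsetD[OF subset_posi])
  qed
  show "(\<lambda>x. t * f x) \<in> natext A" if "f \<in> natext A" "t > 0" for f t
    using that unfolding natext_def by (rule posi_scale)
  show "(\<lambda>x. f x + g x) \<in> natext A" if "f \<in> natext A" "g \<in> natext A" for f g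
    using that by (rule natext_add)
  show "f \<notin> natext A" if "\<forall>x. f x \<le> 0" for f
    using no_nonpos that by auto
qed

lemma natext_insert_cases:
  assumes D: "coherent D" and g: "g \<in> natext (insert f D)"
  obtains l e where "l \<ge> 0" "e \<in> with_zero D" "l > 0 \<or> e \<in> D" "g = (\<lambda>x. l * f x + e x)"
proof -
  define form where "form g \<longleftrightarrow> (\<exists>l e. l \<ge> 0 \<and> e \<in> with_zero D \<and> (l > 0 \<or> e \<in> D) \<and>
      g = (\<lambda>x. l * f x + e x))" for g
  have "form g" using g unfolding natext_def
  proof (induction rule: posi_induct)
    case (base h)
    then have "h = f \<or> h \<in> D" using coherent_nonneg[OF D] unfolding pos_gambles_def by auto
    then show ?case
    proof
      assume "h = f"
      then show ?case unfolding form_def by (intro exI[of _ 1] exI[of _ "\<lambda>_. 0"]) auto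
    next
      assume "h \<in> D"
      then show ?case unfolding form_def by (intro exI[of _ 0] exI[of _ h]) auto
    qed
  next
    case (scale h t)
    then obtain l e where le: "l \<ge> 0" "e \<in> with_zero D" "l > 0 \<or> e \<in> D" "h = (\<lambda>x. l * f x + e x)"
      unfolding form_def by blast
    have "t * l \<ge> 0" "(\<lambda>x. t * e x) \<in> with_zero D" "t * l > 0 \<or> (\<lambda>x. t * e x) \<in> D"
      using le scale.hyps with_zero_scale[OF D] coherent_scale[OF D] by auto
    moreover have "(\<lambda>x. t * h x) = (\<lambda>x. (t * l) * f x + t * e x)"
      using le(4) by (auto simp: algebra_simps)
    ultimately show ?case unfolding form_def by blast
  next
    case (add h h')
    then obtain l e l' e' where
      le: "l \<ge> 0" "e \<in> with_zero D" "l > 0 \<or> e \<in> D" "h = (\<lambda>x. l * f x + e x)" and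
      le': "l' \<ge> 0" "e' \<in> with_zero D" "l' > 0 \<or> e' \<in> D" "h' = (\<lambda>x. l' * f x + e' x)"
      unfolding form_def by blast
    have "l + l' \<ge> 0" "(\<lambda>x. e x + e' x) \<in> with_zero D"
      using le le' with_zero_add[OF D] by auto
    moreover have "l + l' > 0 \<or> (\<lambda>x. e x + e' x) \<in> D"
      using le le' coherent_add_with_zero[OF D] coherent_add_with_zero[OF D, of e' e]
      by (auto simp: add.commute)
    moreover have "(\<lambda>x. h x + h' x) = (\<lambda>x. (l + l') * f x + (e x + e' x))"
      using le(4) le'(4) by (auto simp: algebra_simps)
    ultimately show ?case unfolding form_def by blast
  qed
  then show ?thesis using that unfolding form_def by blast
qed

lemma coherent_natext_insert_uminus:
  assumes D: "coherent D" and f: "f \<in> gambles" "f \<notin> D" "f \<noteq> (\<lambda>_. 0)"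
  shows "coherent (natext (insert (\<lambda>x. - f x) D))"
proof (rule coherent_natextI)
  show "insert (\<lambda>x. - f x) D \<subseteq> gambles"
    using gambles_scale[OF f(1), of "- 1"] coherent_gambles[OF D] by auto
next
  fix g assume "g \<in> natext (insert (\<lambda>x. - f x) D)" and g_nonpos: "\<forall>x. g x \<le> 0"
  then obtain l e where le: "l \<ge> 0" "e \<in> with_zero D" "l > 0 \<or> e \<in> D" "g = (\<lambda>x. l * - f x + e x)"
    using natext_insert_cases[OF D] by metis
  have e_le: "e x \<le> l * f x" for x using g_nonpos le(4) by (auto dest: spec[of _ x])
  show False
  proof (cases "l > 0")
    case False
    then show False using le e_le coherent_nonpos[OF D, of e] by auto
  next
    case l: True
    have "(\<lambda>x. l * f x) \<in> D"
    proof (cases "e \<in> D")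
      case True
      have "e \<in> gambles" using True coherent_gambles[OF D] by blast
      then have "(\<lambda>x. l * f x + - 1 * e x) \<in> gambles"
        by (intro gambles_add gambles_scale f(1))
      then have "(\<lambda>x. e x + (l * f x - e x)) \<in> D"
        using e_le by (intro coherent_add_nonneg[OF D True]) auto
      then show ?thesis by simp
    next
      case False
      then have "e = (\<lambda>_. 0)" using le(2) by simp
      then have "\<forall>x. l * f x \<ge> 0" using e_le by simp
      moreover have "(\<lambda>x. l * f x) \<noteq> (\<lambda>_. 0)" using f(3) l by (auto simp: fun_eq_iff)
      ultimately show ?thesis using coherent_nonneg[OF D] gambles_scale[OF f(1)] by blast
    qed
    then have "(\<lambda>x. (1 / l) * (l * f x)) \<in> D" by (rule coherent_scale[OF D]) (use l in simp)
    then show False using f(2) l by simp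
  qed
qed

section \<open>Coherence of the independent natural extension\<close>

text \<open>The last conjunct excludes the zero gamble.\<close>

definition product_form :: "('a \<Rightarrow> real) set \<Rightarrow> ('b \<Rightarrow> real) set \<Rightarrow> ('a \<times> 'b \<Rightarrow> real) \<Rightarrow> bool" where
  "product_form D1 D2 g \<longleftrightarrow> (\<exists>(n::nat) b F h.
     (\<forall>x1 x2. g (x1, x2) = h (x1, x2) + (\<Sum>k<n. b k x1 * indicator (F k) x2)) \<and>
     (\<forall>k<n. b k \<in> D1 \<and> F k \<noteq> {}) \<and>
     (\<forall>x1. (\<lambda>x2. h (x1, x2)) \<in> with_zero D2) \<and>
     (n \<ge> 1 \<or> (\<exists>x1. (\<lambda>x2. h (x1, x2)) \<in> D2)))"

lemma product_formI:
  fixes n :: nat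
  assumes "\<And>x1 x2. g (x1, x2) = h (x1, x2) + (\<Sum>k<n. b k x1 * indicator (F k) x2)"
    and "\<And>k. k < n \<Longrightarrow> b k \<in> D1 \<and> F k \<noteq> {}"
    and "\<And>x1. (\<lambda>x2. h (x1, x2)) \<in> with_zero D2"
    and "n \<ge> 1 \<or> (\<exists>x1. (\<lambda>x2. h (x1, x2)) \<in> D2)"
  shows "product_form D1 D2 g"
  unfolding product_form_def using assms by blast

lemma product_form_scale:
  assumes D1: "coherent D1" and D2: "coherent D2" and g: "product_form D1 D2 g" and t: "t > 0"
  shows "product_form D1 D2 (\<lambda>z. t * g z)"
proof -
  obtain n :: nat and b F h where
    g_eq: "\<forall>x1 x2. g (x1, x2) = h (x1, x2) + (\<Sum>k<n. b k x1 * indicator (F k) x2)"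
    and bF: "\<forall>k<n. b k \<in> D1 \<and> F k \<noteq> {}"
    and h: "\<forall>x1. (\<lambda>x2. h (x1, x2)) \<in> with_zero D2"
    and nontrivial: "n \<ge> 1 \<or> (\<exists>x1. (\<lambda>x2. h (x1, x2)) \<in> D2)"
    using g unfolding product_form_def by blast
  show ?thesis
  proof (rule product_formI[where h = "\<lambda>z. t * h z" and n = n and b = "\<lambda>k x. t * b k x" and F = F])
    show "t * g (x1, x2) = t * h (x1, x2) + (\<Sum>k<n. t * b k x1 * indicator (F k) x2)" for x1 x2
      using g_eq by (simp add: distrib_left sum_distrib_left mult.assoc)
    show "(\<lambda>x. t * b k x) \<in> D1 \<and> F k \<noteq> {}" if "k < n" for k
      using bF that coherent_scale[OF D1 _ t] by auto
    show "(\<lambda>x2. t * h (x1, x2)) \<in> with_zero D2" for x1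
      using with_zero_scale[OF D2 h[rule_format] t] by simp
    show "n \<ge> 1 \<or> (\<exists>x1. (\<lambda>x2. t * h (x1, x2)) \<in> D2)"
      using nontrivial coherent_scale[OF D2 _ t] by blast
  qed
qed

lemma product_form_add:
  assumes D1: "coherent D1" and D2: "coherent D2"
    and g: "product_form D1 D2 g" and g': "product_form D1 D2 g'"
  shows "product_form D1 D2 (\<lambda>z. g z + g' z)"
proof -
  obtain n :: nat and b F h where
    g_eq: "\<forall>x1 x2. g (x1, x2) = h (x1, x2) + (\<Sum>k<n. b k x1 * indicator (F k) x2)"
    and bF: "\<forall>k<n. b k \<in> D1 \<and> F k \<noteq> {}"
    and h: "\<forall>x1. (\<lambda>x2. h (x1, x2)) \<in> with_zero D2"
    and nontrivial: "n \<ge> 1 \<or> (\<exists>x1. (\<lambda>x2. h (x1, x2)) \<in> D2)"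
    using g unfolding product_form_def by blast
  obtain n' :: nat and b' F' h' where
    g'_eq: "\<forall>x1 x2. g' (x1, x2) = h' (x1, x2) + (\<Sum>k<n'. b' k x1 * indicator (F' k) x2)"
    and bF': "\<forall>k<n'. b' k \<in> D1 \<and> F' k \<noteq> {}"
    and h': "\<forall>x1. (\<lambda>x2. h' (x1, x2)) \<in> with_zero D2"
    using g' unfolding product_form_def by blast
  define B where "B k = (if k < n then b k else b' (k - n))" for k
  define FF where "FF k = (if k < n then F k else F' (k - n))" for k
  show ?thesis
  proof (rule product_formI[where h = "\<lambda>z. h z + h' z" and n = "n + n'" and b = B and F = FF])
    show "g (x1, x2) + g' (x1, x2) =
        h (x1, x2) + h' (x1, x2) + (\<Sum>k<n + n'. B k x1 * indicator (FF k) x2)" for x1 x2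
      using g_eq g'_eq by (simp add: sum_lessThan_add B_def FF_def)
    show "B k \<in> D1 \<and> FF k \<noteq> {}" if "k < n + n'" for k
      using bF bF' that unfolding B_def FF_def by auto
    show "(\<lambda>x2. h (x1, x2) + h' (x1, x2)) \<in> with_zero D2" for x1
      using with_zero_add[OF D2 h[rule_format] h'[rule_format]] by simp
    show "n + n' \<ge> 1 \<or> (\<exists>x1. (\<lambda>x2. h (x1, x2) + h' (x1, x2)) \<in> D2)"
    proof (cases "n = 0")
      case True
      then obtain x1 where "(\<lambda>x2. h (x1, x2)) \<in> D2" using nontrivial by auto
      then have "(\<lambda>x2. h (x1, x2) + h' (x1, x2)) \<in> D2"
        using coherent_add_with_zero[OF D2 _ h'[rule_format]] by simp
      then show ?thesis by blast
    qed simp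
  qed
qed

lemma product_form_A12:
  assumes "{} \<notin> \<B>1" and "g \<in> A12 \<B>1 D2"
  shows "product_form D1 D2 g"
proof -
  obtain f2 B1 where g: "g = (\<lambda>(x1, x2). f2 x2 * indicator B1 x1)" and f2: "f2 \<in> D2"
    and B1: "B1 \<in> \<B>1 \<union> {UNIV}"
    using assms(2) unfolding A12_def by blast
  have "B1 \<noteq> {}" using assms(1) B1 by auto
  then obtain x1 where "x1 \<in> B1" by blast
  then have "(\<lambda>x2. g (x1, x2)) \<in> D2" using f2 g by simp
  moreover have "(\<lambda>x2. g (x1, x2)) \<in> with_zero D2" for x1
    using f2 g by (cases "x1 \<in> B1") auto
  ultimately show ?thesis
    by (intro product_formI[where h = g and n = 0]) auto
qed

lemma product_form_A21:
  assumes "{} \<notin> \<B>2" and "g \<in> A21 \<B>2 D1"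
  shows "product_form D1 D2 g"
proof -
  obtain f1 B2 where g: "g = (\<lambda>(x1, x2). f1 x1 * indicator B2 x2)" and f1: "f1 \<in> D1"
    and B2: "B2 \<in> \<B>2 \<union> {UNIV}"
    using assms(2) unfolding A21_def by blast
  show ?thesis
    using assms(1) f1 B2 g by (intro product_formI[where h = "\<lambda>_. 0" and n = 1 and b = "\<lambda>_. f1" and F = "\<lambda>_. B2"]) auto
qed

lemma product_form_pos_gambles:
  assumes D2: "coherent D2" and p: "p \<in> pos_gambles"
  shows "product_form D1 D2 p"
proof -
  have p_gamble: "p \<in> gambles" and p_nonneg: "\<forall>z. p z \<ge> 0" and "p \<noteq> (\<lambda>_. 0)"
    using p unfolding pos_gambles_def by auto
  then obtain x1 x2 where "p (x1, x2) \<noteq> 0" by (metis surj_pair)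
  then have "(\<lambda>x2. p (x1, x2)) \<noteq> (\<lambda>_. 0)" by meson
  moreover have p_section: "(\<lambda>x2. p (x1, x2)) \<in> with_zero D2" for x1
    using coherent_nonneg[OF D2 gambles_section[OF p_gamble]] p_nonneg by auto
  ultimately have "(\<lambda>x2. p (x1, x2)) \<in> D2" by auto
  then show ?thesis using p_section by (intro product_formI[where h = p and n = 0]) auto
qed

lemma product_form_indep_nat_ext:
  assumes D1: "coherent D1" and D2: "coherent D2" and "{} \<notin> \<B>1" "{} \<notin> \<B>2"
    and g: "g \<in> indep_nat_ext \<B>1 \<B>2 D1 D2"
  shows "product_form D1 D2 g"
  using g unfolding indep_nat_ext_def natext_def
proof (induction rule: posi_induct)
  case (base f)
  then show ?case
    using product_form_A12[OF assms(3)] product_form_A21[OF assms(4)] product_form_pos_gambles[OF D2]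
    by blast
next
  case (scale f t)
  then show ?case by (rule product_form_scale[OF D1 D2])
next
  case (add f f')
  then show ?case by (rule product_form_add[OF D1 D2])
qed

lemma orthant_avoiding_indicator_cone:
  assumes D: "coherent D" and n: "n \<ge> 1" and F: "\<And>k. k < n \<Longrightarrow> F k \<noteq> {}"
  shows "orthant_avoiding_cone n {c. (\<lambda>x. \<Sum>k<n. c k * indicator (F k) x) \<in> with_zero D}"
proof
  fix c d assume "c \<in> {c. (\<lambda>x. \<Sum>k<n. c k * indicator (F k) x) \<in> with_zero D}"
    and "d \<in> {c. (\<lambda>x. \<Sum>k<n. c k * indicator (F k) x) \<in> with_zero D}"
  then show "(\<lambda>k. c k + d k) \<in> {c. (\<lambda>x. \<Sum>k<n. c k * indicator (F k) x) \<in> with_zero D}"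
    using with_zero_add[OF D] by (simp add: distrib_right sum.distrib)
next
  fix c and t :: real assume "c \<in> {c. (\<lambda>x. \<Sum>k<n. c k * indicator (F k) x) \<in> with_zero D}"
    and "t > 0"
  then show "(\<lambda>k. t * c k) \<in> {c. (\<lambda>x. \<Sum>k<n. c k * indicator (F k) x) \<in> with_zero D}"
    using with_zero_scale[OF D, of "\<lambda>x. \<Sum>k<n. c k * indicator (F k) x" t]
    by (simp add: sum_distrib_left mult.assoc)
next
  fix c assume c: "c \<in> {c. (\<lambda>x. \<Sum>k<n. c k * indicator (F k) x) \<in> with_zero D}"
  show "\<exists>k<n. c k \<ge> 0"
  proof (rule ccontr)
    assume "\<not> (\<exists>k<n. c k \<ge> 0)"
    then have neg: "\<forall>k<n. c k < 0" by auto
    define \<phi> where "\<phi> x = (\<Sum>k<n. c k * indicator (F k) x)" for x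
    have "\<phi> x \<le> 0" for x
      unfolding \<phi>_def using neg by (intro sum_nonpos) (simp add: indicator_def less_imp_le)
    moreover obtain x where x: "x \<in> F 0" using F n by fastforce
    have "\<phi> x \<le> c 0"
    proof -
      have "\<phi> x = c 0 + (\<Sum>k\<in>{..<n} - {0}. c k * indicator (F k) x)"
        unfolding \<phi>_def using n x by (subst sum.remove[of _ 0]) auto
      moreover have "(\<Sum>k\<in>{..<n} - {0}. c k * indicator (F k) x) \<le> 0"
        using neg by (intro sum_nonpos) (simp add: indicator_def less_imp_le)
      ultimately show ?thesis by simp
    qed
    then have "\<phi> \<noteq> (\<lambda>_. 0)" using neg n by force
    ultimately show False using c coherent_nonpos[OF D, of \<phi>] unfolding \<phi>_def by auto
  qed
qed (use n in simp_all)

lemma product_form_not_nonpos: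
  assumes D1: "coherent D1" and D2: "coherent D2" and g: "product_form D1 D2 g"
    and g_gamble: "g \<in> gambles" and g_nonpos: "\<forall>z. g z \<le> 0"
  shows False
proof -
  obtain n :: nat and b F h where
    g_eq: "\<forall>x1 x2. g (x1, x2) = h (x1, x2) + (\<Sum>k<n. b k x1 * indicator (F k) x2)"
    and bF: "\<forall>k<n. b k \<in> D1 \<and> F k \<noteq> {}"
    and h: "\<forall>x1. (\<lambda>x2. h (x1, x2)) \<in> with_zero D2"
    and nontrivial: "n \<ge> 1 \<or> (\<exists>x1. (\<lambda>x2. h (x1, x2)) \<in> D2)"
    using g unfolding product_form_def by blast
  show False
  proof (cases "n = 0")
    case True
    then obtain x1 where "(\<lambda>x2. h (x1, x2)) \<in> D2" using nontrivial by auto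
    moreover have "\<forall>x2. h (x1, x2) \<le> 0" using g_eq g_nonpos True by (metis add.right_neutral lessThan_0 sum.empty)
    ultimately show False using coherent_nonpos[OF D2, of "\<lambda>x2. h (x1, x2)"] by blast
  next
    case False
    define G where "G = {c. (\<lambda>x. \<Sum>k<n. c k * indicator (F k) x) \<in> with_zero D2}"
    interpret orthant_avoiding_cone n G
      unfolding G_def using False bF by (intro orthant_avoiding_indicator_cone[OF D2]) auto
    obtain \<mu> where \<mu>: "\<forall>k<n. \<mu> k \<ge> 0" "\<exists>k<n. \<mu> k > 0" "\<forall>c\<in>G. 0 \<le> (\<Sum>k<n. \<mu> k * c k)"
      using separating_weights by blast
    \<comment> \<open>each \<open>X\<^sub>1\<close>-section of \<open>-g\<close> is nonnegative, so the coefficients \<open>-b\<^sub>k(x\<^sub>1)\<close> lie in \<open>G\<close>\<close>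
    have "(\<lambda>k. - b k x1) \<in> G" for x1
    proof -
      have "(\<lambda>x2. - g (x1, x2)) \<in> gambles"
        using gambles_scale[OF gambles_section[OF g_gamble], of "- 1"] by simp
      then have "(\<lambda>x2. h (x1, x2) + - g (x1, x2)) \<in> with_zero D2"
        using g_nonpos by (intro with_zero_add_nonneg[OF D2 h[rule_format]]) auto
      moreover have "(\<lambda>x2. h (x1, x2) + - g (x1, x2)) = (\<lambda>x2. \<Sum>k<n. - b k x1 * indicator (F k) x2)"
        using g_eq by (auto simp: sum_negf)
      ultimately show ?thesis unfolding G_def by simp
    qed
    then have "(\<Sum>k<n. \<mu> k * b k x1) \<le> 0" for x1
      using \<mu>(3) by (fastforce simp: sum_negf)
    moreover have "(\<lambda>x. \<Sum>k<n. \<mu> k * b k x) \<in> D1"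
      using \<mu>(1,2) bF by (auto intro!: coherent_sum[OF D1])
    ultimately show False using coherent_nonpos[OF D1, of "\<lambda>x. \<Sum>k<n. \<mu> k * b k x"] by blast
  qed
qed

lemma indep_nat_ext_coherent:
  assumes D1: "coherent D1" and D2: "coherent D2" and "{} \<notin> \<B>1" "{} \<notin> \<B>2"
  shows "coherent (indep_nat_ext \<B>1 \<B>2 D1 D2)"
  unfolding indep_nat_ext_def
proof (rule coherent_natextI)
  have "(\<lambda>(x1, x2). f x1 * indicator B x2) \<in> gambles" if "f \<in> gambles" for f and B :: "'b set"
    unfolding split_def using that by (rule gambles_times_indicator)
  moreover have "(\<lambda>(x1, x2). f x2 * indicator B x1) \<in> gambles" if "f \<in> gambles" for f and B :: "'a set"
    unfolding split_def using that by (rule gambles_times_indicator)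
  ultimately show "A12 \<B>1 D2 \<union> A21 \<B>2 D1 \<subseteq> gambles"
    using coherent_gambles[OF D1] coherent_gambles[OF D2] unfolding A12_def A21_def by blast
  then have "natext (A12 \<B>1 D2 \<union> A21 \<B>2 D1) \<subseteq> gambles" by (rule natext_gambles)
  then show False if "g \<in> natext (A12 \<B>1 D2 \<union> A21 \<B>2 D1)" "\<forall>x. g x \<le> 0" for g
    using that product_form_indep_nat_ext[OF assms] product_form_not_nonpos[OF D1 D2]
    unfolding indep_nat_ext_def by blast
qed

section \<open>Marginals of the independent natural extension\<close>

lemma A12I: "f \<in> D \<Longrightarrow> B \<in> \<B> \<union> {UNIV} \<Longrightarrow> (\<lambda>(x1, x2). f x2 * indicator B x1) \<in> A12 \<B> D"
  unfolding A12_def by blast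

lemma A21I: "f \<in> D \<Longrightarrow> B \<in> \<B> \<union> {UNIV} \<Longrightarrow> (\<lambda>(x1, x2). f x1 * indicator B x2) \<in> A21 \<B> D"
  unfolding A21_def by blast

lemma indep_nat_ext_A12:
  "f \<in> D2 \<Longrightarrow> B \<in> \<B>1 \<union> {UNIV} \<Longrightarrow> (\<lambda>(x1, x2). f x2 * indicator B x1) \<in> indep_nat_ext \<B>1 \<B>2 D1 D2"
  unfolding indep_nat_ext_def by (rule subsetD[OF subset_natext], rule UnI1, rule A12I)

lemma indep_nat_ext_A21:
  "f \<in> D1 \<Longrightarrow> B \<in> \<B>2 \<union> {UNIV} \<Longrightarrow> (\<lambda>(x1, x2). f x1 * indicator B x2) \<in> indep_nat_ext \<B>1 \<B>2 D1 D2"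
  unfolding indep_nat_ext_def by (rule subsetD[OF subset_natext], rule UnI2, rule A21I)

lemma indep_nat_ext_mono1: "D1 \<subseteq> D1' \<Longrightarrow> indep_nat_ext \<B>1 \<B>2 D1 D2 \<subseteq> indep_nat_ext \<B>1 \<B>2 D1' D2"
  unfolding indep_nat_ext_def A21_def by (intro natext_mono) blast

lemma A12_swap: "(\<lambda>g. g \<circ> prod.swap) ` A12 \<B> D \<subseteq> A21 \<B> D"
proof (rule image_subsetI)
  fix g assume "g \<in> A12 \<B> D"
  then obtain f B where g: "g = (\<lambda>(x1, x2). f x2 * indicator B x1)" "f \<in> D" "B \<in> \<B> \<union> {UNIV}"
    unfolding A12_def by blast
  then have "g \<circ> prod.swap = (\<lambda>(x1, x2). f x1 * indicator B x2)" by (auto simp: fun_eq_iff)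
  then show "g \<circ> prod.swap \<in> A21 \<B> D" using A21I[OF g(2,3)] by simp
qed

lemma A21_swap: "(\<lambda>g. g \<circ> prod.swap) ` A21 \<B> D \<subseteq> A12 \<B> D"
proof (rule image_subsetI)
  fix g assume "g \<in> A21 \<B> D"
  then obtain f B where g: "g = (\<lambda>(x1, x2). f x1 * indicator B x2)" "f \<in> D" "B \<in> \<B> \<union> {UNIV}"
    unfolding A21_def by blast
  then have "g \<circ> prod.swap = (\<lambda>(x1, x2). f x2 * indicator B x1)" by (auto simp: fun_eq_iff)
  then show "g \<circ> prod.swap \<in> A12 \<B> D" using A12I[OF g(2,3)] by simp
qed

lemma pos_gambles_swap: "g \<in> pos_gambles \<Longrightarrow> g \<circ> prod.swap \<in> pos_gambles"
proof -
  assume g: "g \<in> pos_gambles"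
  have "g \<circ> prod.swap \<noteq> (\<lambda>_. 0)"
  proof
    assume "g \<circ> prod.swap = (\<lambda>_. 0)"
    then have "(g \<circ> prod.swap) \<circ> prod.swap = (\<lambda>_. 0)" by (simp add: comp_def)
    then show False using g unfolding pos_gambles_def by (simp add: comp_def)
  qed
  then show ?thesis using g gambles_comp unfolding pos_gambles_def by auto
qed

lemma indep_nat_ext_swap:
  assumes "g \<in> indep_nat_ext \<B>1 \<B>2 D1 D2"
  shows "g \<circ> prod.swap \<in> indep_nat_ext \<B>2 \<B>1 D2 D1"
proof -
  have "g \<circ> prod.swap \<in> posi ((\<lambda>f. f \<circ> prod.swap) ` (A12 \<B>1 D2 \<union> A21 \<B>2 D1 \<union> pos_gambles))"
    using assms unfolding indep_nat_ext_def natext_def by (rule posi_comp)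
  moreover have "(\<lambda>f. f \<circ> prod.swap) ` (A12 \<B>1 D2 \<union> A21 \<B>2 D1 \<union> pos_gambles) \<subseteq>
      A12 \<B>2 D1 \<union> A21 \<B>1 D2 \<union> pos_gambles"
    using A12_swap A21_swap pos_gambles_swap unfolding image_Un by blast
  ultimately show ?thesis
    unfolding indep_nat_ext_def natext_def using posi_mono by blast
qed

lemma indep_nat_ext_times_indicator_imp_mem:
  assumes D1: "coherent D1" and D2: "coherent D2" and "{} \<notin> \<B>1" "{} \<notin> \<B>2"
    and B: "B \<in> \<B>2 \<union> {UNIV}" and f: "f \<in> gambles"
    and f_in: "(\<lambda>(x1, x2). f x1 * indicator B x2) \<in> indep_nat_ext \<B>1 \<B>2 D1 D2"
  shows "f \<in> D1"
proof (rule ccontr)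
  assume f_notin: "f \<notin> D1"
  have "f \<noteq> (\<lambda>_. 0)"
  proof
    assume "f = (\<lambda>_. 0)"
    then have "(\<lambda>_. 0) \<in> indep_nat_ext \<B>1 \<B>2 D1 D2" using f_in by (simp add: split_def)
    then show False
      using coherent_nonpos[OF indep_nat_ext_coherent[OF assms(1-4)], of "\<lambda>_. 0"] by simp
  qed
  define D1' where "D1' = natext (insert (\<lambda>x. - f x) D1)"
  have D1': "coherent D1'"
    unfolding D1'_def using coherent_natext_insert_uminus[OF D1 f f_notin \<open>f \<noteq> _\<close>] .
  have "D1 \<subseteq> D1'" unfolding D1'_def using subset_natext by blast
  then have "(\<lambda>(x1, x2). f x1 * indicator B x2) \<in> indep_nat_ext \<B>1 \<B>2 D1' D2"
    using f_in indep_nat_ext_mono1 by blast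
  moreover have "(\<lambda>(x1, x2). - f x1 * indicator B x2) \<in> indep_nat_ext \<B>1 \<B>2 D1' D2"
  proof -
    have "(\<lambda>x. - f x) \<in> D1'" unfolding D1'_def by (rule subsetD[OF subset_natext]) simp
    then show ?thesis using B by (rule indep_nat_ext_A21)
  qed
  ultimately have "(\<lambda>z. (\<lambda>(x1, x2). f x1 * indicator B x2) z + (\<lambda>(x1, x2). - f x1 * indicator B x2) z)
      \<in> indep_nat_ext \<B>1 \<B>2 D1' D2"
    unfolding indep_nat_ext_def by (rule natext_add)
  then have "(\<lambda>_. 0) \<in> indep_nat_ext \<B>1 \<B>2 D1' D2" by (simp add: split_def)
  then show False
    using coherent_nonpos[OF indep_nat_ext_coherent[OF D1' D2 assms(3,4)], of "\<lambda>_. 0"] by simp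
qed

lemma marg1_cond_indep_nat_ext:
  assumes D1: "coherent D1" and D2: "coherent D2" and "{} \<notin> \<B>1" "{} \<notin> \<B>2"
    and B: "B \<in> \<B>2 \<union> {UNIV}"
  shows "marg1_cond (indep_nat_ext \<B>1 \<B>2 D1 D2) B = D1"
proof
  have "(\<lambda>(x1, x2). f x1 * indicator B x2) \<in> indep_nat_ext \<B>1 \<B>2 D1 D2" if "f \<in> D1" for f
    using that B by (rule indep_nat_ext_A21)
  then show "D1 \<subseteq> marg1_cond (indep_nat_ext \<B>1 \<B>2 D1 D2) B"
    unfolding marg1_cond_def using coherent_gambles[OF D1] by blast
  show "marg1_cond (indep_nat_ext \<B>1 \<B>2 D1 D2) B \<subseteq> D1"
    unfolding marg1_cond_def by (auto intro: indep_nat_ext_times_indicator_imp_mem[OF assms])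
qed

lemma marg2_cond_indep_nat_ext:
  assumes D1: "coherent D1" and D2: "coherent D2" and "{} \<notin> \<B>1" "{} \<notin> \<B>2"
    and B: "B \<in> \<B>1 \<union> {UNIV}"
  shows "marg2_cond (indep_nat_ext \<B>1 \<B>2 D1 D2) B = D2"
proof
  have "(\<lambda>(x1, x2). f x2 * indicator B x1) \<in> indep_nat_ext \<B>1 \<B>2 D1 D2" if "f \<in> D2" for f
    using that B by (rule indep_nat_ext_A12)
  then show "D2 \<subseteq> marg2_cond (indep_nat_ext \<B>1 \<B>2 D1 D2) B"
    unfolding marg2_cond_def using coherent_gambles[OF D2] by blast
next
  show "marg2_cond (indep_nat_ext \<B>1 \<B>2 D1 D2) B \<subseteq> D2"
  proof
    fix f assume "f \<in> marg2_cond (indep_nat_ext \<B>1 \<B>2 D1 D2) B"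
    then have f: "f \<in> gambles"
      and "(\<lambda>(x1, x2). f x2 * indicator B x1) \<in> indep_nat_ext \<B>1 \<B>2 D1 D2"
      unfolding marg2_cond_def by auto
    then have "(\<lambda>(x1, x2). f x2 * indicator B x1) \<circ> prod.swap \<in> indep_nat_ext \<B>2 \<B>1 D2 D1"
      by (intro indep_nat_ext_swap)
    moreover have "(\<lambda>(x1, x2). f x2 * indicator B x1) \<circ> prod.swap = (\<lambda>(x1, x2). f x1 * indicator B x2)"
      by (auto simp: fun_eq_iff)
    ultimately have "f \<in> marg1_cond (indep_nat_ext \<B>2 \<B>1 D2 D1) B"
      using f unfolding marg1_cond_def by simp
    then show "f \<in> D2" using marg1_cond_indep_nat_ext[OF D2 D1 assms(4,3) B] by simp
  qed
qed

lemma marg1_cond_UNIV: "marg1_cond D UNIV = marg1 D"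
  unfolding marg1_cond_def marg1_def cyl1_def by simp

lemma marg2_cond_UNIV: "marg2_cond D UNIV = marg2 D"
  unfolding marg2_cond_def marg2_def cyl2_def by simp

lemma indep_product_iff:
  "indep_product \<B>1 \<B>2 D1 D2 D \<longleftrightarrow> coherent D \<and>
     (\<forall>B\<in>\<B>2 \<union> {UNIV}. marg1_cond D B = D1) \<and> (\<forall>B\<in>\<B>1 \<union> {UNIV}. marg2_cond D B = D2)"
  unfolding indep_product_def epist_indep_def by (auto simp: ball_Un marg1_cond_UNIV marg2_cond_UNIV)

lemma indep_nat_ext_subset_indep_product:
  assumes "indep_product \<B>1 \<B>2 D1 D2 D"
  shows "indep_nat_ext \<B>1 \<B>2 D1 D2 \<subseteq> D"
proof -
  have D: "coherent D" and marg1: "\<forall>B\<in>\<B>2 \<union> {UNIV}. marg1_cond D B = D1"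
    and marg2: "\<forall>B\<in>\<B>1 \<union> {UNIV}. marg2_cond D B = D2"
    using assms unfolding indep_product_iff by auto
  have "A12 \<B>1 D2 \<subseteq> D"
  proof
    fix g assume "g \<in> A12 \<B>1 D2"
    then obtain f B where "g = (\<lambda>(x1, x2). f x2 * indicator B x1)" "f \<in> D2" "B \<in> \<B>1 \<union> {UNIV}"
      unfolding A12_def by blast
    then show "g \<in> D" using marg2 unfolding marg2_cond_def by auto
  qed
  moreover have "A21 \<B>2 D1 \<subseteq> D"
  proof
    fix g assume "g \<in> A21 \<B>2 D1"
    then obtain f B where "g = (\<lambda>(x1, x2). f x1 * indicator B x2)" "f \<in> D1" "B \<in> \<B>2 \<union> {UNIV}"
      unfolding A21_def by blast
    then show "g \<in> D" using marg1 unfolding marg1_cond_def by auto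
  qed
  ultimately show ?thesis unfolding indep_nat_ext_def by (intro natext_subset_coherent[OF D]) auto
qed

theorem theorem16:
  fixes \<B>1 :: "'a set set" and \<B>2 :: "'b set set"
    and D1 :: "('a \<Rightarrow> real) set" and D2 :: "('b \<Rightarrow> real) set"
  assumes "{} \<notin> \<B>1" and "{} \<notin> \<B>2"
    and "coherent D1" and "coherent D2"
  shows "indep_product \<B>1 \<B>2 D1 D2 (indep_nat_ext \<B>1 \<B>2 D1 D2) \<and>
         (\<forall>D. indep_product \<B>1 \<B>2 D1 D2 D \<longrightarrow> indep_nat_ext \<B>1 \<B>2 D1 D2 \<subseteq> D)"
proof (intro conjI allI impI)
  show "indep_product \<B>1 \<B>2 D1 D2 (indep_nat_ext \<B>1 \<B>2 D1 D2)"
    unfolding indep_product_iff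
    using assms by (simp add: indep_nat_ext_coherent marg1_cond_indep_nat_ext marg2_cond_indep_nat_ext)
qed (rule indep_nat_ext_subset_indep_product)

end
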